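(* Consider the connections $\Gamma_1^1$, $\Gamma_2^1(c)$ and $\Gamma_3^1(c)$ for $c\notin\{0,-1\}$, $\Gamma_4^1(c)$ and $\Gamma_5^1(c)$ for $c\in\mathbb R$. Two of these are locally affinely equivalent if and only if one of the following holds: (1) both belong to $\{\Gamma_1^1\}\cup\{\Gamma_4^1(c):c\in\mathbb R\}$ (all of these are mutually affinely equivalent); (2) they are $\Gamma_i^1(c)$ and $\Gamma_j^1(\tilde c)$ with $i,j\in\{2,3\}$ and $c=\tilde c$ or $c=-1-\tilde c$; (3) they are $\Gamma_5^1(c)$ and $\Gamma_5^1(\tilde c)$ with $c=\pm\tilde c$.
   Context: A torsion-free connection has Christoffel symbols $\nabla_{\partial_{x^i}}\partial_{x^j}=\Gamma_{ij}^k\partial_{x^k}$. For real constants, $\Gamma(a,b,c,d,e,f)$ denotes the connection on $\mathbb R^2$ with constant Christoffel symbols $\Gamma_{11}^1=a$, $\Gamma_{11}^2=b$, $\Gamma_{12}^1=\Gamma_{21}^1=c$, $\Gamma_{12}^2=\Gamma_{21}^2=d$, $\Gamma_{22}^1=e$, $\Gamma_{22}^2=f$ (Type $\mathcal A$ connections). Two connections $\nabla,\tilde\nabla$ on $\mathbb R^2$ are (locally) affinely equivalent if there exist open sets $U,V\subset\mathbb R^2$ and a diffeomorphism $T:U\to V$ with $T^*\tilde\nabla=\nabla$ on $U$. The specific connections: $\Gamma_1^1:=\Gamma(-1,0,1,0,0,2)$; $\Gamma_2^1(c):=\Gamma(-1,0,c,0,0,1+2c)$; $\Gamma_3^1(c):=\Gamma(0,0,c,0,0,1+2c)$;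 $\Gamma_4^1(c):=\Gamma(0,0,1,0,c,2)$; $\Gamma_5^1(c):=\Gamma(1,0,0,0,1+c^2,2c)$. *)

theory Defs
  imports "HOL-Analysis.Analysis"
begin

text \<open>Points of R^2 are pairs; coordinate x^1 has index 0, x^2 has index 1.\<close>

definition coord :: "nat \<Rightarrow> real \<times> real \<Rightarrow> real" where
  "coord k p = (if k = 0 then fst p else snd p)"

definition unitv :: "nat \<Rightarrow> real \<times> real" where
  "unitv i = (if i = 0 then (1, 0) else (0, 1))"

definition pd :: "nat \<Rightarrow> (real \<times> real \<Rightarrow> real) \<Rightarrow> real \<times> real \<Rightarrow> real" where
  "pd i f x = deriv (\<lambda>t. f (x + t *\<^sub>R unitv i)) 0"

fun Ck_on :: "nat \<Rightarrow> (real \<times> real) set \<Rightarrow> (real \<times> real \<Rightarrow> real) \<Rightarrow> bool" where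
  "Ck_on 0 U f = continuous_on U f"
| "Ck_on (Suc k) U f = (continuous_on U f \<and>
     (\<forall>x\<in>U. \<forall>i<2. (\<lambda>t. f (x + t *\<^sub>R unitv i)) differentiable (at 0)) \<and>
     (\<forall>i<2. Ck_on k U (pd i f)))"

definition smooth_fun_on :: "(real \<times> real) set \<Rightarrow> (real \<times> real \<Rightarrow> real) \<Rightarrow> bool" where
  "smooth_fun_on U f = (\<forall>k. Ck_on k U f)"

definition smooth_map_on :: "(real \<times> real) set \<Rightarrow> (real \<times> real \<Rightarrow> real \<times> real) \<Rightarrow> bool" where
  "smooth_map_on U T = (\<forall>k<2. smooth_fun_on U (\<lambda>p. coord k (T p)))"

text \<open>A connection with constant Christoffel symbols: G i j k = Gamma_{ij}^k (indices 0,1).\<close>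
type_synonym christoffel = "nat \<Rightarrow> nat \<Rightarrow> nat \<Rightarrow> real"

definition Gam :: "real \<Rightarrow> real \<Rightarrow> real \<Rightarrow> real \<Rightarrow> real \<Rightarrow> real \<Rightarrow> christoffel" where
  "Gam a b c d e f = (\<lambda>i j k.
     if i = 0 \<and> j = 0 then (if k = 0 then a else b)
     else if i = 1 \<and> j = 1 then (if k = 0 then e else f)
     else (if k = 0 then c else d))"

text \<open>Pullback condition T^* G' = G on U, written in coordinates:
  d_i d_j T^k + sum_{a,b} G'_{ab}^k d_i T^a d_j T^b = sum_l d_l T^k G_{ij}^l.\<close>
definition pullback_eq :: "(real \<times> real) set \<Rightarrow> (real \<times> real \<Rightarrow> real \<times> real)
    \<Rightarrow> christoffel \<Rightarrow> christoffel \<Rightarrow> bool" where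
  "pullback_eq U T G G' = (\<forall>x\<in>U. \<forall>i<2. \<forall>j<2. \<forall>k<2.
     pd i (pd j (\<lambda>p. coord k (T p))) x
     + (\<Sum>a<2. \<Sum>b<2. G' a b k * pd i (\<lambda>p. coord a (T p)) x * pd j (\<lambda>p. coord b (T p)) x)
     = (\<Sum>l<2. pd l (\<lambda>p. coord k (T p)) x * G i j l))"

definition affinely_equivalent :: "christoffel \<Rightarrow> christoffel \<Rightarrow> bool" where
  "affinely_equivalent G G' = (\<exists>U V T S.
     open U \<and> U \<noteq> {} \<and> open V \<and> T ` U = V \<and> S ` V = U \<and>
     (\<forall>x\<in>U. S (T x) = x) \<and> (\<forall>y\<in>V. T (S y) = y) \<and>
     smooth_map_on U T \<and> smooth_map_on V S \<and> pullback_eq U T G G')"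

text \<open>The family Gamma_i^1(c); for i = 1 the parameter c is ignored.\<close>
definition GammaF :: "nat \<Rightarrow> real \<Rightarrow> christoffel" where
  "GammaF i c = (if i = 1 then Gam (-1) 0 1 0 0 2
     else if i = 2 then Gam (-1) 0 c 0 0 (1 + 2*c)
     else if i = 3 then Gam 0 0 c 0 0 (1 + 2*c)
     else if i = 4 then Gam 0 0 1 0 c 2
     else Gam 1 0 0 0 (1 + c^2) (2*c))"

definition admissible :: "nat \<Rightarrow> real \<Rightarrow> bool" where
  "admissible i c = (i \<in> {1,4,5} \<or> (i \<in> {2,3} \<and> c \<noteq> 0 \<and> c \<noteq> -1))"

end

theory Submission
  imports Defs
begin

text \<open>
  All these connections have the form \<open>\<Gamma>(a,0,c,0,e,f)\<close>. Their Ricci tensor is \<open>\<rho> dy\<^sup>2\<close> with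
  \<open>\<rho> = ae + cf - c\<^sup>2\<close>, and \<open>f\<^sup>2/\<rho>\<close> is an affine invariant: if \<open>T = (u, v)\<close> pulls
  \<open>\<Gamma>(a',0,c',0,e',f')\<close> back to \<open>\<Gamma>(a,0,c,0,e,f)\<close>, the symmetry of the mixed partials of
  \<open>\<partial>\<^sub>yv\<close> in the pullback equations forces \<open>\<rho> \<partial>\<^sub>xv = 0\<close>; then that of \<open>\<partial>\<^sub>yu\<close> gives
  \<open>\<partial>\<^sub>xu (\<rho>' (\<partial>\<^sub>yv)\<^sup>2 - \<rho>) = 0\<close>, where \<open>\<partial>\<^sub>xu\<close> cannot vanish identically because \<open>T\<close> is
  injective; differentiating \<open>\<rho> = \<rho>' (\<partial>\<^sub>yv)\<^sup>2\<close> and inserting it into the equation for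
  \<open>\<partial>\<^sub>y\<^sup>2v\<close> yields \<open>f = f' \<partial>\<^sub>yv\<close>. On the five families \<open>f\<^sup>2 - 4\<rho>\<close> is the constant
  \<open>0\<close>, \<open>1\<close> or \<open>-4\<close>, so the invariant and the sign of \<open>\<rho>\<close> separate the classes and fix
  \<open>\<rho>\<close>, hence the parameter up to the stated symmetries. Conversely the equivalences are
  realised by explicit maps such as \<open>(x + ky\<^sup>2, y)\<close>, \<open>(x e\<^sup>-\<^sup>y, -y)\<close> and \<open>(e\<^sup>-\<^sup>x\<^sup>-\<^sup>y, -y)\<close>.
\<close>

definition partial_differentiable :: "nat \<Rightarrow> (real \<times> real \<Rightarrow> real) \<Rightarrow> real \<times> real \<Rightarrow> bool" where
  "partial_differentiable i f z \<longleftrightarrow> (\<lambda>t. f (z + t *\<^sub>R unitv i)) differentiable (at 0)"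

lemma Ck_on_Suc_iff:
  "Ck_on (Suc k) U f \<longleftrightarrow> continuous_on U f \<and> (\<forall>x\<in>U. \<forall>i<2. partial_differentiable i f x)
     \<and> (\<forall>i<2. Ck_on k U (pd i f))"
  by (simp add: partial_differentiable_def)

declare Ck_on.simps(2) [simp del]

lemma has_real_derivative_pd:
  "partial_differentiable i f z \<Longrightarrow> ((\<lambda>t. f (z + t *\<^sub>R unitv i)) has_real_derivative pd i f z) (at 0)"
  unfolding partial_differentiable_def pd_def by (simp add: DERIV_deriv_iff_real_differentiable)

lemma pd_eqI:
  "((\<lambda>t. f (z + t *\<^sub>R unitv i)) has_real_derivative D) (at 0) \<Longrightarrow> pd i f z = D"
  unfolding pd_def by (rule DERIV_imp_deriv)

lemma partial_differentiableI:
  "((\<lambda>t. f (z + t *\<^sub>R unitv i)) has_real_derivative D) (at 0) \<Longrightarrow> partial_differentiable i f z"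
  unfolding partial_differentiable_def by (auto simp: real_differentiable_def)

lemma eventually_line_in_open:
  assumes "open U" "z \<in> U"
  shows "eventually (\<lambda>t. z + t *\<^sub>R unitv i \<in> U) (nhds 0)"
proof -
  have "open ((\<lambda>t. z + t *\<^sub>R unitv i) -` U)"
    using assms(1) by (intro continuous_open_vimage continuous_intros)
  then show ?thesis
    using eventually_nhds_in_open[of _ 0] assms(2) by force
qed

lemma eventually_eq_on_line:
  assumes "open U" "z \<in> U" "\<And>y. y \<in> U \<Longrightarrow> f y = g y"
  shows "eventually (\<lambda>t. f (z + t *\<^sub>R unitv i) = g (z + t *\<^sub>R unitv i)) (nhds 0)"
  using eventually_line_in_open[OF assms(1,2)] by eventually_elim (use assms(3) in blast)

lemma pd_cong_open:
  assumes "open U" "z \<in> U" "\<And>y. y \<in> U \<Longrightarrow> f y = g y"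
  shows "pd i f z = pd i g z"
  unfolding pd_def by (rule deriv_cong_ev[OF eventually_eq_on_line[OF assms] refl])

lemma partial_differentiable_cong_open:
  assumes "open U" "z \<in> U" "\<And>y. y \<in> U \<Longrightarrow> f y = g y" "partial_differentiable i f z"
  shows "partial_differentiable i g z"
proof (rule partial_differentiableI)
  have "eventually (\<lambda>t. f (z + t *\<^sub>R unitv i) = g (z + t *\<^sub>R unitv i)) (nhds 0)"
    using assms(1-3) by (rule eventually_eq_on_line)
  from DERIV_cong_ev[OF refl this refl] has_real_derivative_pd[OF assms(4)]
  show "((\<lambda>t. g (z + t *\<^sub>R unitv i)) has_real_derivative pd i f z) (at 0)" by simp
qed

lemma has_real_derivative_pd0:
  assumes "partial_differentiable 0 f (a, b)"
  shows "((\<lambda>s. f (s, b)) has_real_derivative pd 0 f (a, b)) (at a)"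
proof -
  have "((\<lambda>t. f (t + a, b)) has_real_derivative pd 0 f (a, b)) (at 0)"
    using has_real_derivative_pd[OF assms] by (simp add: unitv_def add.commute)
  then show ?thesis using DERIV_shift[of "\<lambda>s. f (s, b)" _ 0 a] by simp
qed

lemma has_real_derivative_pd1:
  assumes "partial_differentiable 1 f (a, b)"
  shows "((\<lambda>s. f (a, s)) has_real_derivative pd 1 f (a, b)) (at b)"
proof -
  have "((\<lambda>t. f (a, t + b)) has_real_derivative pd 1 f (a, b)) (at 0)"
    using has_real_derivative_pd[OF assms] by (simp add: unitv_def add.commute)
  then show ?thesis using DERIV_shift[of "\<lambda>s. f (a, s)" _ 0 b] by simp
qed

lemma
  shows pd_const: "pd i (\<lambda>x. k) z = 0"
    and pd_fst: "pd i fst z = fst (unitv i)"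
    and pd_snd: "pd i snd z = snd (unitv i)"
    and partial_differentiable_const: "partial_differentiable i (\<lambda>x. k) z"
    and partial_differentiable_fst: "partial_differentiable i fst z"
    and partial_differentiable_snd: "partial_differentiable i snd z"
  by (auto intro!: pd_eqI partial_differentiableI derivative_eq_intros)

context
  fixes i :: nat and z :: "real \<times> real" and f :: "real \<times> real \<Rightarrow> real"
  assumes f: "partial_differentiable i f z"
begin

lemma pd_minus: "pd i (\<lambda>x. - f x) z = - pd i f z"
  and partial_differentiable_minus: "partial_differentiable i (\<lambda>x. - f x) z"
  and pd_exp: "pd i (\<lambda>x. exp (f x)) z = exp (f z) * pd i f z"
  and partial_differentiable_exp: "partial_differentiable i (\<lambda>x. exp (f x)) z"
  using has_real_derivative_pd[OF f]
  by (auto intro!: pd_eqI partial_differentiableI derivative_eq_intros)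

lemma pd_inverse: "f z \<noteq> 0 \<Longrightarrow> pd i (\<lambda>x. inverse (f x)) z = - (pd i f z * (inverse (f z))\<^sup>2)"
  and partial_differentiable_inverse: "f z \<noteq> 0 \<Longrightarrow> partial_differentiable i (\<lambda>x. inverse (f x)) z"
  and pd_ln: "0 < f z \<Longrightarrow> pd i (\<lambda>x. ln (f x)) z = pd i f z * inverse (f z)"
  and partial_differentiable_ln: "0 < f z \<Longrightarrow> partial_differentiable i (\<lambda>x. ln (f x)) z"
  using has_real_derivative_pd[OF f]
  by (auto intro!: pd_eqI partial_differentiableI derivative_eq_intros
      simp del: inverse_eq_divide simp add: power2_eq_square divide_inverse)

context
  fixes g :: "real \<times> real \<Rightarrow> real"
  assumes g: "partial_differentiable i g z"
begin

lemma pd_add: "pd i (\<lambda>x. f x + g x) z = pd i f z + pd i g z"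
  and partial_differentiable_add: "partial_differentiable i (\<lambda>x. f x + g x) z"
  and pd_diff: "pd i (\<lambda>x. f x - g x) z = pd i f z - pd i g z"
  and partial_differentiable_diff: "partial_differentiable i (\<lambda>x. f x - g x) z"
  and pd_mult: "pd i (\<lambda>x. f x * g x) z = pd i f z * g z + f z * pd i g z"
  and partial_differentiable_mult: "partial_differentiable i (\<lambda>x. f x * g x) z"
  using has_real_derivative_pd[OF f] has_real_derivative_pd[OF g]
  by (auto intro!: pd_eqI partial_differentiableI derivative_eq_intros)

end

end

lemmas pd_simps =
  pd_const pd_fst pd_snd pd_minus pd_exp pd_inverse pd_ln pd_add pd_diff pd_mult
  partial_differentiable_const partial_differentiable_fst partial_differentiable_snd
  partial_differentiable_minus partial_differentiable_exp partial_differentiable_inverse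
  partial_differentiable_ln partial_differentiable_add partial_differentiable_diff
  partial_differentiable_mult

section \<open>Symmetry of mixed partial derivatives\<close>

lemma second_difference_eq_pd1_pd0:
  assumes "0 < h"
    and "\<And>s t. s \<in> {x..x+h} \<Longrightarrow> t \<in> {y..y+h} \<Longrightarrow>
      partial_differentiable 0 g (s, t) \<and> partial_differentiable 1 (pd 0 g) (s, t)"
  obtains s t where "s \<in> {x<..<x+h}" "t \<in> {y<..<y+h}"
    "g (x+h, y+h) - g (x+h, y) - g (x, y+h) + g (x, y) = h * h * pd 1 (pd 0 g) (s, t)"
proof -
  have "\<exists>s. x < s \<and> s < x + h \<and> (g (x+h, y+h) - g (x+h, y)) - (g (x, y+h) - g (x, y))
      = (x + h - x) * (pd 0 g (s, y+h) - pd 0 g (s, y))"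
    using assms by (intro MVT2 DERIV_diff has_real_derivative_pd0) auto
  then obtain s where s: "s \<in> {x<..<x+h}"
    and "g (x+h, y+h) - g (x+h, y) - g (x, y+h) + g (x, y) = h * (pd 0 g (s, y+h) - pd 0 g (s, y))"
    by auto
  moreover have "\<exists>t. y < t \<and> t < y + h \<and> pd 0 g (s, y+h) - pd 0 g (s, y)
      = (y + h - y) * pd 1 (pd 0 g) (s, t)"
    using assms s by (intro MVT2 has_real_derivative_pd1) auto
  ultimately show thesis using that by auto
qed

lemma second_difference_eq_pd0_pd1:
  assumes "0 < h"
    and "\<And>s t. s \<in> {x..x+h} \<Longrightarrow> t \<in> {y..y+h} \<Longrightarrow>
      partial_differentiable 1 g (s, t) \<and> partial_differentiable 0 (pd 1 g) (s, t)"
  obtains s t where "s \<in> {x<..<x+h}" "t \<in> {y<..<y+h}"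
    "g (x+h, y+h) - g (x+h, y) - g (x, y+h) + g (x, y) = h * h * pd 0 (pd 1 g) (s, t)"
proof -
  have "\<exists>t. y < t \<and> t < y + h \<and> (g (x+h, y+h) - g (x, y+h)) - (g (x+h, y) - g (x, y))
      = (y + h - y) * (pd 1 g (x+h, t) - pd 1 g (x, t))"
    using assms by (intro MVT2 DERIV_diff has_real_derivative_pd1) auto
  then obtain t where t: "t \<in> {y<..<y+h}"
    and "g (x+h, y+h) - g (x+h, y) - g (x, y+h) + g (x, y) = h * (pd 1 g (x+h, t) - pd 1 g (x, t))"
    by (auto simp: algebra_simps)
  moreover have "\<exists>s. x < s \<and> s < x + h \<and> pd 1 g (x+h, t) - pd 1 g (x, t)
      = (x + h - x) * pd 0 (pd 1 g) (s, t)"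
    using assms t by (intro MVT2 has_real_derivative_pd0) auto
  ultimately show thesis using that by auto
qed

lemma square_subset_ball:
  assumes "0 < d"
  shows "{x..x + d/3} \<times> {y..y + d/3} \<subseteq> ball (x, y) d"
proof
  fix p assume "p \<in> {x..x + d/3} \<times> {y..y + d/3}"
  then have "sqrt ((fst p - x)\<^sup>2 + (snd p - y)\<^sup>2) < d"
    using sqrt_sum_squares_le_sum_abs[of "fst p - x" "snd p - y"] assms by auto
  then show "p \<in> ball (x, y) d"
    by (cases p) (simp add: dist_Pair_Pair dist_real_def dist_commute power2_commute)
qed

theorem pd_commute:
  assumes "open U" "Ck_on 2 U g" "z \<in> U"
  shows "pd 1 (pd 0 g) z = pd 0 (pd 1 g) z"
proof -
  let ?A = "pd 1 (pd 0 g)" and ?B = "pd 0 (pd 1 g)"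
  obtain x y where z: "z = (x, y)" by (cases z)
  have diff: "\<And>w i j. w \<in> U \<Longrightarrow> i < 2 \<Longrightarrow> j < 2 \<Longrightarrow>
      partial_differentiable i g w \<and> partial_differentiable j (pd i g) w"
    and "continuous_on U ?A" "continuous_on U ?B"
    using assms(2) by (simp_all add: numeral_2_eq_2 Ck_on_Suc_iff)
  then have "(?A \<longlongrightarrow> ?A z) (nhds z)" "(?B \<longlongrightarrow> ?B z) (nhds z)"
    using assms(1,3) by (simp_all add: continuous_on_eq_continuous_at isCont_def flip: tendsto_at_iff_tendsto_nhds)
  have "\<bar>?A z - ?B z\<bar> \<le> e" if "0 < e" for e
  proof -
    have "\<forall>\<^sub>F w in nhds z. w \<in> U \<and> dist (?A w) (?A z) < e/2 \<and> dist (?B w) (?B z) < e/2"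
      using eventually_nhds_in_open[OF assms(1,3)] \<open>0 < e\<close>
        tendstoD[OF \<open>(?A \<longlongrightarrow> ?A z) (nhds z)\<close>, of "e/2"]
        tendstoD[OF \<open>(?B \<longlongrightarrow> ?B z) (nhds z)\<close>, of "e/2"]
      by (intro eventually_conj) auto
    then obtain d where "0 < d"
      and d: "\<And>w. dist w z < d \<Longrightarrow> w \<in> U \<and> \<bar>?A w - ?A z\<bar> < e/2 \<and> \<bar>?B w - ?B z\<bar> < e/2"
      by (auto simp: eventually_nhds_metric dist_real_def)
    have square: "(s, t) \<in> U \<and> \<bar>?A (s, t) - ?A z\<bar> < e/2 \<and> \<bar>?B (s, t) - ?B z\<bar> < e/2"
      if "s \<in> {x..x + d/3}" "t \<in> {y..y + d/3}" for s t
    proof -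
      have "(s, t) \<in> ball z d"
        using square_subset_ball[OF \<open>0 < d\<close>, of x y] that z by blast
      then show ?thesis
        using d by (simp add: dist_commute)
    qed
    have "0 < d/3" using \<open>0 < d\<close> by simp
    have pd01: "partial_differentiable 0 g (s, t) \<and> partial_differentiable 1 (pd 0 g) (s, t)"
      and pd10: "partial_differentiable 1 g (s, t) \<and> partial_differentiable 0 (pd 1 g) (s, t)"
      if "s \<in> {x..x + d/3}" "t \<in> {y..y + d/3}" for s t
      using diff[of "(s, t)" 0 1] diff[of "(s, t)" 1 0] square[OF that] by simp_all
    obtain s t where st: "s \<in> {x<..<x + d/3}" "t \<in> {y<..<y + d/3}"
      and A: "g (x + d/3, y + d/3) - g (x + d/3, y) - g (x, y + d/3) + g (x, y) = d/3 * (d/3) * ?A (s, t)"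
      by (rule second_difference_eq_pd1_pd0[OF \<open>0 < d/3\<close> pd01])
    obtain s' t' where st': "s' \<in> {x<..<x + d/3}" "t' \<in> {y<..<y + d/3}"
      and B: "g (x + d/3, y + d/3) - g (x + d/3, y) - g (x, y + d/3) + g (x, y) = d/3 * (d/3) * ?B (s', t')"
      by (rule second_difference_eq_pd0_pd1[OF \<open>0 < d/3\<close> pd10])
    have "\<bar>?A (s, t) - ?A z\<bar> < e/2" "\<bar>?B (s', t') - ?B z\<bar> < e/2"
      using square st st' by auto
    moreover have "?A (s, t) = ?B (s', t')"
      using A B \<open>0 < d\<close> by simp
    ultimately show ?thesis by linarith
  qed
  then show ?thesis
    using dense_eq0_I[of "?A z - ?B z"] by simp
qed

lemma Ck_on_mono: "Ck_on (Suc k) U f \<Longrightarrow> Ck_on k U f"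
  by (induction k arbitrary: f) (auto simp: Ck_on_Suc_iff)

lemma Ck_on_SucD:
  assumes "Ck_on (Suc k) U f"
  shows "Ck_on k U f" "continuous_on U f"
    and "x \<in> U \<Longrightarrow> i < 2 \<Longrightarrow> partial_differentiable i f x"
    and "i < 2 \<Longrightarrow> Ck_on k U (pd i f)"
  using assms Ck_on_mono[OF assms] by (simp_all add: Ck_on_Suc_iff)

lemma Ck_on_cong_open:
  assumes "open U" "\<And>x. x \<in> U \<Longrightarrow> f x = g x" "Ck_on k U f"
  shows "Ck_on k U g"
  using assms(2,3)
proof (induction k arbitrary: f g)
  case 0
  then show ?case by (metis Ck_on.simps(1) continuous_on_cong)
next
  case (Suc k)
  have "continuous_on U g"
    using Suc.prems by (metis Ck_on_Suc_iff continuous_on_cong)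
  moreover have "partial_differentiable i g x" if "x \<in> U" "i < 2" for x i
  proof (rule partial_differentiable_cong_open[OF assms(1) \<open>x \<in> U\<close> Suc.prems(1)])
    show "partial_differentiable i f x" using Suc.prems(2) that by (simp add: Ck_on_Suc_iff)
  qed
  moreover have "Ck_on k U (pd i g)" if "i < 2" for i
  proof (rule Suc.IH)
    show "Ck_on k U (pd i f)" using Suc.prems(2) that by (simp add: Ck_on_Suc_iff)
    show "pd i f x = pd i g x" if "x \<in> U" for x
      using assms(1) that Suc.prems(1) by (rule pd_cong_open)
  qed
  ultimately show ?case by (simp add: Ck_on_Suc_iff)
qed

lemma Ck_on_SucI:
  assumes "open U" "continuous_on U h"
    and "\<And>x i. x \<in> U \<Longrightarrow> i < 2 \<Longrightarrow> partial_differentiable i h x"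
    and "\<And>x i. x \<in> U \<Longrightarrow> i < 2 \<Longrightarrow> pd i h x = D i x"
    and "\<And>i. i < 2 \<Longrightarrow> Ck_on k U (D i)"
  shows "Ck_on (Suc k) U h"
  using assms Ck_on_cong_open[OF assms(1), of "D i" "pd i h" k for i]
  by (simp add: Ck_on_Suc_iff)

lemma Ck_on_const: "Ck_on k U (\<lambda>x. a)"
proof (induction k arbitrary: a)
  case (Suc k)
  have "pd i (\<lambda>x. a) = (\<lambda>x. 0)" for i by (simp add: fun_eq_iff pd_simps)
  then show ?case using Suc by (simp add: Ck_on_Suc_iff pd_simps)
qed simp

lemma Ck_on_fst: "Ck_on k U fst"
  and Ck_on_snd: "Ck_on k U snd"
proof -
  have "pd i fst = (\<lambda>x. fst (unitv i))" "pd i snd = (\<lambda>x. snd (unitv i))" for i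
    by (simp_all add: fun_eq_iff pd_simps)
  then show "Ck_on k U fst" "Ck_on k U snd"
    by (cases k; simp add: Ck_on_Suc_iff pd_simps Ck_on_const continuous_on_fst continuous_on_snd)+
qed

context
  fixes U :: "(real \<times> real) set"
  assumes U: "open U"
begin

lemma Ck_on_add: "Ck_on k U f \<Longrightarrow> Ck_on k U g \<Longrightarrow> Ck_on k U (\<lambda>x. f x + g x)"
proof (induction k arbitrary: f g)
  case (Suc k)
  note f = Ck_on_SucD[OF Suc.prems(1)] and g = Ck_on_SucD[OF Suc.prems(2)]
  show ?case
  proof (rule Ck_on_SucI[OF U, where D="\<lambda>i x. pd i f x + pd i g x"])
    fix x and i :: nat assume "x \<in> U" "i < 2"
    then show "partial_differentiable i (\<lambda>x. f x + g x) x" "pd i (\<lambda>x. f x + g x) x = pd i f x + pd i g x"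
      using f g by (simp_all add: pd_simps)
  qed (use f g Suc.IH in \<open>auto intro: continuous_on_add\<close>)
qed (simp add: continuous_on_add)

lemma Ck_on_mult: "Ck_on k U f \<Longrightarrow> Ck_on k U g \<Longrightarrow> Ck_on k U (\<lambda>x. f x * g x)"
proof (induction k arbitrary: f g)
  case (Suc k)
  note f = Ck_on_SucD[OF Suc.prems(1)] and g = Ck_on_SucD[OF Suc.prems(2)]
  show ?case
  proof (rule Ck_on_SucI[OF U, where D="\<lambda>i x. pd i f x * g x + f x * pd i g x"])
    fix x and i :: nat assume "x \<in> U" "i < 2"
    then show "partial_differentiable i (\<lambda>x. f x * g x) x"
      "pd i (\<lambda>x. f x * g x) x = pd i f x * g x + f x * pd i g x"
      using f g by (simp_all add: pd_simps)
  qed (use f g Suc.IH in \<open>auto intro: continuous_on_mult Ck_on_add\<close>)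
qed (simp add: continuous_on_mult)

lemma Ck_on_minus: "Ck_on k U f \<Longrightarrow> Ck_on k U (\<lambda>x. - f x)"
  using Ck_on_mult[of k "\<lambda>x. -1" f] by (simp add: Ck_on_const)

lemma Ck_on_diff: "Ck_on k U f \<Longrightarrow> Ck_on k U g \<Longrightarrow> Ck_on k U (\<lambda>x. f x - g x)"
  using Ck_on_add[of k f "\<lambda>x. - g x"] Ck_on_minus[of k g] by simp

lemma Ck_on_exp: "Ck_on k U f \<Longrightarrow> Ck_on k U (\<lambda>x. exp (f x))"
proof (induction k arbitrary: f)
  case (Suc k)
  note f = Ck_on_SucD[OF Suc.prems]
  show ?case
  proof (rule Ck_on_SucI[OF U, where D="\<lambda>i x. exp (f x) * pd i f x"])
    fix x and i :: nat assume "x \<in> U" "i < 2"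
    then show "partial_differentiable i (\<lambda>x. exp (f x)) x"
      "pd i (\<lambda>x. exp (f x)) x = exp (f x) * pd i f x"
      using f by (simp_all add: pd_simps)
  qed (use f Suc.IH in \<open>auto intro: continuous_on_exp Ck_on_mult\<close>)
qed (simp add: continuous_on_exp)

lemma Ck_on_inverse:
  "(\<And>x. x \<in> U \<Longrightarrow> f x \<noteq> 0) \<Longrightarrow> Ck_on k U f \<Longrightarrow> Ck_on k U (\<lambda>x. inverse (f x))"
proof (induction k arbitrary: f)
  case (Suc k)
  note f = Ck_on_SucD[OF Suc.prems(2)]
  show ?case
  proof (rule Ck_on_SucI[OF U, where D="\<lambda>i x. - (pd i f x * (inverse (f x))\<^sup>2)"])
    fix x and i :: nat assume "x \<in> U" "i < 2"
    then show "partial_differentiable i (\<lambda>x. inverse (f x)) x"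
      "pd i (\<lambda>x. inverse (f x)) x = - (pd i f x * (inverse (f x))\<^sup>2)"
      using f Suc.prems(1)[of x] by (simp_all add: pd_simps)
  qed (use f Suc in \<open>auto simp: power2_eq_square intro!: continuous_on_inverse Ck_on_minus Ck_on_mult\<close>)
qed (auto intro!: continuous_on_inverse)

lemma Ck_on_ln:
  assumes "\<And>x. x \<in> U \<Longrightarrow> 0 < f x" "Ck_on k U f"
  shows "Ck_on k U (\<lambda>x. ln (f x))"
proof (cases k)
  case 0
  then show ?thesis using assms by (auto simp: less_imp_neq[THEN not_sym] intro!: continuous_on_ln)
next
  case (Suc k')
  note f = Ck_on_SucD[OF assms(2)[unfolded Suc]]
  show ?thesis unfolding Suc
  proof (rule Ck_on_SucI[OF U, where D="\<lambda>i x. pd i f x * inverse (f x)"])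
    fix x and i :: nat assume "x \<in> U" "i < 2"
    then show "partial_differentiable i (\<lambda>x. ln (f x)) x"
      "pd i (\<lambda>x. ln (f x)) x = pd i f x * inverse (f x)"
      using f assms(1)[of x] by (simp_all add: pd_simps)
  qed (use f assms(1) in \<open>auto simp: less_imp_neq[THEN not_sym]
      intro!: continuous_on_ln Ck_on_mult Ck_on_inverse\<close>)
qed

lemma smooth_fun_on_add: "smooth_fun_on U f \<Longrightarrow> smooth_fun_on U g \<Longrightarrow> smooth_fun_on U (\<lambda>x. f x + g x)"
  and smooth_fun_on_diff: "smooth_fun_on U f \<Longrightarrow> smooth_fun_on U g \<Longrightarrow> smooth_fun_on U (\<lambda>x. f x - g x)"
  and smooth_fun_on_mult: "smooth_fun_on U f \<Longrightarrow> smooth_fun_on U g \<Longrightarrow> smooth_fun_on U (\<lambda>x. f x * g x)"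
  and smooth_fun_on_minus: "smooth_fun_on U f \<Longrightarrow> smooth_fun_on U (\<lambda>x. - f x)"
  and smooth_fun_on_exp: "smooth_fun_on U f \<Longrightarrow> smooth_fun_on U (\<lambda>x. exp (f x))"
  and smooth_fun_on_ln:
    "(\<And>x. x \<in> U \<Longrightarrow> 0 < f x) \<Longrightarrow> smooth_fun_on U f \<Longrightarrow> smooth_fun_on U (\<lambda>x. ln (f x))"
  by (simp_all add: smooth_fun_on_def Ck_on_add Ck_on_diff Ck_on_mult Ck_on_minus Ck_on_exp Ck_on_ln)

end

lemma smooth_fun_on_const: "smooth_fun_on U (\<lambda>x. a)"
  and smooth_fun_on_fst: "smooth_fun_on U fst"
  and smooth_fun_on_snd: "smooth_fun_on U snd"
  by (simp_all add: smooth_fun_on_def Ck_on_const Ck_on_fst Ck_on_snd)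

lemma smooth_map_on_Pair:
  "smooth_fun_on U f \<Longrightarrow> smooth_fun_on U g \<Longrightarrow> smooth_map_on U (\<lambda>p. (f p, g p))"
  by (auto simp: smooth_map_on_def coord_def less_2_cases_iff)

lemmas smooth_map_on_intros =
  smooth_map_on_Pair smooth_fun_on_add smooth_fun_on_diff smooth_fun_on_mult smooth_fun_on_minus
  smooth_fun_on_exp smooth_fun_on_ln smooth_fun_on_const smooth_fun_on_fst smooth_fun_on_snd

lemma smooth_fun_on_pd: "smooth_fun_on U f \<Longrightarrow> i < 2 \<Longrightarrow> smooth_fun_on U (pd i f)"
  and smooth_fun_on_partial_differentiable:
    "smooth_fun_on U f \<Longrightarrow> x \<in> U \<Longrightarrow> i < 2 \<Longrightarrow> partial_differentiable i f x"
  by (auto simp: smooth_fun_on_def intro: Ck_on_SucD)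

lemma smooth_fun_on_pd_commute:
  "open U \<Longrightarrow> smooth_fun_on U g \<Longrightarrow> z \<in> U \<Longrightarrow> pd 1 (pd 0 g) z = pd 0 (pd 1 g) z"
  unfolding smooth_fun_on_def by (rule pd_commute) auto

section \<open>The pullback equations for $\Gamma(a,0,c,0,e,f)$\<close>

text \<open>\<open>Ux, Uy, Vx, Vy\<close> stand for the Jacobian entries of \<open>T = (u, v)\<close>; the first four
  equations are the \<open>v\<close>-components of \<open>pullback_eq\<close>, the last four the \<open>u\<close>-components.\<close>

definition pullback_pde ::
  "real \<Rightarrow> real \<Rightarrow> real \<Rightarrow> real \<Rightarrow> real \<Rightarrow> real \<Rightarrow> real \<Rightarrow> real \<Rightarrow>
   (real \<times> real \<Rightarrow> real) \<Rightarrow> (real \<times> real \<Rightarrow> real) \<Rightarrow> (real \<times> real \<Rightarrow> real) \<Rightarrow>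
   (real \<times> real \<Rightarrow> real) \<Rightarrow> real \<times> real \<Rightarrow> bool" where
  "pullback_pde a c e f a' c' e' f' Ux Uy Vx Vy x \<longleftrightarrow>
     pd 0 Vx x + f' * (Vx x)\<^sup>2 = a * Vx x \<and>
     pd 0 Vy x + f' * Vx x * Vy x = c * Vx x \<and>
     pd 1 Vx x + f' * Vx x * Vy x = c * Vx x \<and>
     pd 1 Vy x + f' * (Vy x)\<^sup>2 = e * Vx x + f * Vy x \<and>
     pd 0 Ux x + a' * (Ux x)\<^sup>2 + 2 * c' * Ux x * Vx x + e' * (Vx x)\<^sup>2 = a * Ux x \<and>
     pd 0 Uy x + a' * Ux x * Uy x + c' * (Ux x * Vy x + Vx x * Uy x) + e' * Vx x * Vy x = c * Ux x \<and>
     pd 1 Ux x + a' * Ux x * Uy x + c' * (Ux x * Vy x + Vx x * Uy x) + e' * Vx x * Vy x = c * Ux x \<and>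
     pd 1 Uy x + a' * (Uy x)\<^sup>2 + 2 * c' * Uy x * Vy x + e' * (Vy x)\<^sup>2 = e * Ux x + f * Uy x"

lemma pullback_eq_Gam_iff:
  "pullback_eq U T (Gam a 0 c 0 e f) (Gam a' 0 c' 0 e' f') \<longleftrightarrow>
   (\<forall>x\<in>U. pullback_pde a c e f a' c' e' f'
      (pd 0 (\<lambda>p. fst (T p))) (pd 1 (\<lambda>p. fst (T p))) (pd 0 (\<lambda>p. snd (T p))) (pd 1 (\<lambda>p. snd (T p))) x)"
  unfolding pullback_eq_def pullback_pde_def
  by (simp add: numeral_2_eq_2 All_less_Suc coord_def Gam_def power2_eq_square algebra_simps
      conj_commute conj_left_commute)

lemma pullback_pde_cong_open:
  assumes "open U" "x \<in> U"
    and "\<And>y. y \<in> U \<Longrightarrow> Ux y = Ux' y \<and> Uy y = Uy' y \<and> Vx y = Vx' y \<and> Vy y = Vy' y"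
  shows "pullback_pde a c e f a' c' e' f' Ux Uy Vx Vy x \<longleftrightarrow> pullback_pde a c e f a' c' e' f' Ux' Uy' Vx' Vy' x"
proof -
  have "pd i Ux x = pd i Ux' x" "pd i Uy x = pd i Uy' x" "pd i Vx x = pd i Vx' x" "pd i Vy x = pd i Vy' x"
    for i using assms by (auto intro!: pd_cong_open[OF assms(1,2)])
  then show ?thesis using assms(2,3) by (simp add: pullback_pde_def)
qed

lemma affinely_equivalent_GamI:
  assumes "open U" "U \<noteq> {}" "open V"
    and "\<And>x. x \<in> U \<Longrightarrow> T x \<in> V \<and> S (T x) = x" "\<And>y. y \<in> V \<Longrightarrow> S y \<in> U \<and> T (S y) = y"
    and "smooth_map_on U T" "smooth_map_on V S"
    and "\<And>x. x \<in> U \<Longrightarrow> pd 0 (\<lambda>p. fst (T p)) x = Ux x \<and> pd 1 (\<lambda>p. fst (T p)) x = Uy x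
      \<and> pd 0 (\<lambda>p. snd (T p)) x = Vx x \<and> pd 1 (\<lambda>p. snd (T p)) x = Vy x"
    and "\<And>x. x \<in> U \<Longrightarrow> pullback_pde a c e f a' c' e' f' Ux Uy Vx Vy x"
  shows "affinely_equivalent (Gam a 0 c 0 e f) (Gam a' 0 c' 0 e' f')"
proof -
  have "T ` U = V"
  proof
    show "V \<subseteq> T ` U"
    proof
      fix y assume "y \<in> V"
      then show "y \<in> T ` U" using assms(5)[of y] by (metis image_eqI)
    qed
  qed (use assms(4) in auto)
  moreover have "S ` V = U"
  proof
    show "U \<subseteq> S ` V"
    proof
      fix x assume "x \<in> U"
      then show "x \<in> S ` V" using assms(4)[of x] by (metis image_eqI)
    qed
  qed (use assms(5) in auto)
  moreover have "pullback_eq U T (Gam a 0 c 0 e f) (Gam a' 0 c' 0 e' f')"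
    unfolding pullback_eq_Gam_iff
  proof
    fix x assume "x \<in> U"
    have "pullback_pde a c e f a' c' e' f' (pd 0 (\<lambda>p. fst (T p))) (pd 1 (\<lambda>p. fst (T p)))
        (pd 0 (\<lambda>p. snd (T p))) (pd 1 (\<lambda>p. snd (T p))) x
      \<longleftrightarrow> pullback_pde a c e f a' c' e' f' Ux Uy Vx Vy x"
      using assms(1) \<open>x \<in> U\<close> assms(8) by (rule pullback_pde_cong_open)
    with assms(9)[OF \<open>x \<in> U\<close>]
    show "pullback_pde a c e f a' c' e' f' (pd 0 (\<lambda>p. fst (T p))) (pd 1 (\<lambda>p. fst (T p)))
        (pd 0 (\<lambda>p. snd (T p))) (pd 1 (\<lambda>p. snd (T p))) x" by blast
  qed
  ultimately show ?thesis
    unfolding affinely_equivalent_def using assms(1-7)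
    by (intro exI[of _ U] exI[of _ V] exI[of _ T] exI[of _ S]) simp
qed

section \<open>Explicit affine equivalences\<close>

lemma affinely_equivalent_shear:
  assumes "k * a = 0" "k * (2 * c - f) = 0"
  shows "affinely_equivalent (Gam a 0 c 0 (e + 2 * k) f) (Gam a 0 c 0 e f)"
  by (rule affinely_equivalent_GamI[where U=UNIV and V=UNIV
        and T="\<lambda>p. (fst p + k * (snd p)\<^sup>2, snd p)" and S="\<lambda>p. (fst p - k * (snd p)\<^sup>2, snd p)"
        and Ux="\<lambda>p. 1" and Uy="\<lambda>p. 2 * k * snd p" and Vx="\<lambda>p. 0" and Vy="\<lambda>p. 1"])
    (use assms in \<open>auto simp: pd_simps unitv_def pullback_pde_def power2_eq_square algebra_simps
      intro!: smooth_map_on_intros\<close>)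

lemma affinely_equivalent_reflection:
  "affinely_equivalent (Gam a 0 c 0 e f) (Gam a 0 (- c) 0 e (- f))"
  by (rule affinely_equivalent_GamI[where U=UNIV and V=UNIV
        and T="\<lambda>p. (fst p, - snd p)" and S="\<lambda>p. (fst p, - snd p)"
        and Ux="\<lambda>p. 1" and Uy="\<lambda>p. 0" and Vx="\<lambda>p. 0" and Vy="\<lambda>p. -1"])
    (auto simp: pd_simps unitv_def pullback_pde_def intro!: smooth_map_on_intros)

lemma affinely_equivalent_skew_reflection:
  "affinely_equivalent (Gam a 0 (a - c) 0 (a - 2 * c + e + f) (- f)) (Gam a 0 c 0 e f)"
  by (rule affinely_equivalent_GamI[where U=UNIV and V=UNIV
        and T="\<lambda>p. (fst p + snd p, - snd p)" and S="\<lambda>p. (fst p + snd p, - snd p)"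
        and Ux="\<lambda>p. 1" and Uy="\<lambda>p. 1" and Vx="\<lambda>p. 0" and Vy="\<lambda>p. -1"])
    (auto simp: pd_simps unitv_def pullback_pde_def algebra_simps intro!: smooth_map_on_intros)

lemma affinely_equivalent_exp_scaling:
  "affinely_equivalent (Gam 0 0 (- 1 - c) 0 0 (- 1 - 2 * c)) (Gam 0 0 c 0 0 (1 + 2 * c))"
  by (rule affinely_equivalent_GamI[where U=UNIV and V=UNIV
        and T="\<lambda>p. (fst p * exp (- snd p), - snd p)" and S="\<lambda>p. (fst p * exp (- snd p), - snd p)"
        and Ux="\<lambda>p. exp (- snd p)" and Uy="\<lambda>p. - (fst p * exp (- snd p))"
        and Vx="\<lambda>p. 0" and Vy="\<lambda>p. -1"])
    (auto simp: pd_simps unitv_def pullback_pde_def algebra_simps power2_eq_square mult_exp_exp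
      intro!: smooth_map_on_intros)

lemma affinely_equivalent_exp_shear:
  assumes "k * (2 * c - f) = 0"
  shows "affinely_equivalent (Gam (- 1) 0 c 0 0 f) (Gam 0 0 c 0 (- 2 * k) f)"
  by (rule affinely_equivalent_GamI[where U=UNIV and V="{p. 0 < fst p - k * (snd p)\<^sup>2}"
        and T="\<lambda>p. (exp (- fst p) + k * (snd p)\<^sup>2, snd p)"
        and S="\<lambda>p. (- ln (fst p - k * (snd p)\<^sup>2), snd p)"
        and Ux="\<lambda>p. - exp (- fst p)" and Uy="\<lambda>p. 2 * k * snd p" and Vx="\<lambda>p. 0" and Vy="\<lambda>p. 1"])
    (use assms in \<open>auto simp: pd_simps unitv_def pullback_pde_def algebra_simps power2_eq_square
      intro!: smooth_map_on_intros open_Collect_less continuous_intros\<close>)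

lemma affinely_equivalent_log_shear:
  assumes "k * (2 * c - f) = 0"
  shows "affinely_equivalent (Gam 0 0 c 0 (- 2 * k) f) (Gam (- 1) 0 c 0 0 f)"
proof (rule affinely_equivalent_GamI[where V=UNIV and U="{p. 0 < fst p - k * (snd p)\<^sup>2}"
      and S="\<lambda>p. (exp (- fst p) + k * (snd p)\<^sup>2, snd p)"
      and T="\<lambda>p. (- ln (fst p - k * (snd p)\<^sup>2), snd p)"
      and Ux="\<lambda>p. - inverse (fst p - k * (snd p)\<^sup>2)"
      and Uy="\<lambda>p. 2 * k * snd p * inverse (fst p - k * (snd p)\<^sup>2)" and Vx="\<lambda>p. 0" and Vy="\<lambda>p. 1"])
  have "(1, 0) \<in> {p::real \<times> real. 0 < fst p - k * (snd p)\<^sup>2}" by simp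
  then show "{p::real \<times> real. 0 < fst p - k * (snd p)\<^sup>2} \<noteq> {}" by blast
qed (use assms in \<open>auto simp: pd_simps unitv_def pullback_pde_def algebra_simps power2_eq_square
      intro!: smooth_map_on_intros open_Collect_less continuous_intros\<close>)

lemma affinely_equivalent_exp_skew:
  "affinely_equivalent (Gam (- 1) 0 (- 1 - c) 0 e (- 1 - 2 * c - e)) (Gam 0 0 c 0 0 (1 + 2 * c + e))"
  by (rule affinely_equivalent_GamI[where U=UNIV and V="{p. 0 < fst p}"
        and T="\<lambda>p. (exp (- fst p - snd p), - snd p)" and S="\<lambda>p. (snd p - ln (fst p), - snd p)"
        and Ux="\<lambda>p. - exp (- fst p - snd p)" and Uy="\<lambda>p. - exp (- fst p - snd p)"
        and Vx="\<lambda>p. 0" and Vy="\<lambda>p. -1"])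
    (auto simp: pd_simps unitv_def pullback_pde_def algebra_simps power2_eq_square
      intro!: smooth_map_on_intros open_Collect_less continuous_intros)

lemma affinely_equivalent_log_skew:
  "affinely_equivalent (Gam 0 0 (- 1 - c) 0 0 (- 1 - 2 * c + e)) (Gam (- 1) 0 c 0 e (1 + 2 * c - e))"
proof (rule affinely_equivalent_GamI[where V=UNIV and U="{p. 0 < fst p}"
      and S="\<lambda>p. (exp (- fst p - snd p), - snd p)" and T="\<lambda>p. (snd p - ln (fst p), - snd p)"
      and Ux="\<lambda>p. - inverse (fst p)" and Uy="\<lambda>p. 1" and Vx="\<lambda>p. 0" and Vy="\<lambda>p. -1"])
  have "(1, 0) \<in> {p::real \<times> real. 0 < fst p}" by simp
  then show "{p::real \<times> real. 0 < fst p} \<noteq> {}" by blast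
qed (auto simp: pd_simps unitv_def pullback_pde_def algebra_simps power2_eq_square
      intro!: smooth_map_on_intros open_Collect_less continuous_intros)

lemma affinely_equivalent_Gam_refl: "affinely_equivalent (Gam a 0 c 0 e f) (Gam a 0 c 0 e f)"
  using affinely_equivalent_shear[of 0 a c f e] by simp

lemma affinely_equivalent_GammaF_1_4:
  assumes "i \<in> {1, 4}" "j \<in> {1, 4}"
  shows "affinely_equivalent (GammaF i c) (GammaF j c')"
proof -
  have "c' + 2 * ((c - c') / 2) = c" by (simp add: field_simps)
  then have "affinely_equivalent (Gam 0 0 1 0 c 2) (Gam 0 0 1 0 c' 2)"
    using affinely_equivalent_shear[of "(c - c') / 2" 0 1 2 c'] by simp
  then show ?thesis
    using assms affinely_equivalent_Gam_refl affinely_equivalent_exp_shear[of "- c' / 2" 1 2]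
      affinely_equivalent_log_shear[of "- c / 2" 1 2]
    by (auto simp: GammaF_def)
qed

lemma affinely_equivalent_GammaF_2_3:
  assumes "i \<in> {2, 3}" "j \<in> {2, 3}"
  shows "affinely_equivalent (GammaF i c) (GammaF j c)"
    and "affinely_equivalent (GammaF i (- 1 - c)) (GammaF j c)"
  using assms affinely_equivalent_Gam_refl affinely_equivalent_exp_shear[of 0 c "1 + 2 * c"]
    affinely_equivalent_log_shear[of 0 c "1 + 2 * c"]
    affinely_equivalent_skew_reflection[of "- 1" c 0 "1 + 2 * c"] affinely_equivalent_exp_scaling[of c]
    affinely_equivalent_exp_skew[of c 0] affinely_equivalent_log_skew[of c 0]
  by (auto simp: GammaF_def)

lemma affinely_equivalent_GammaF_5:
  shows "affinely_equivalent (GammaF 5 c) (GammaF 5 c)"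
    and "affinely_equivalent (GammaF 5 (- c)) (GammaF 5 c)"
  using affinely_equivalent_Gam_refl affinely_equivalent_reflection[of 1 0 "1 + c\<^sup>2" "- 2 * c"]
  by (simp_all add: GammaF_def)

section \<open>An affine invariant\<close>

lemma inj_on_pd0_nonzero:
  assumes "open U" "U \<noteq> {}" "inj_on (\<lambda>x. (u x, v x)) U"
    and "\<And>x. x \<in> U \<Longrightarrow> partial_differentiable 0 u x \<and> partial_differentiable 0 v x \<and> pd 0 v x = 0"
  shows "\<exists>x\<in>U. pd 0 u x \<noteq> 0"
proof (rule ccontr)
  assume "\<not> (\<exists>x\<in>U. pd 0 u x \<noteq> 0)"
  then have horizontal: "partial_differentiable 0 w x \<and> pd 0 w x = 0" if "x \<in> U" "w \<in> {u, v}" for w x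
    using assms(4)[OF that(1)] that by auto
  obtain x y where "(x, y) \<in> U" using assms(2) by auto
  then obtain d where "0 < d" and d: "ball (x, y) d \<subseteq> U"
    using assms(1) open_contains_ball by blast
  have line: "(s, y) \<in> U" if "s \<in> {x - d<..<x + d}" for s
    using that d by (auto simp: dist_Pair_Pair dist_real_def)
  have "w (x + d/2, y) = w (x, y)" if "w \<in> {u, v}" for w
  proof (rule DERIV_isconst3[of "x - d" "x + d" _ _ "\<lambda>s. w (s, y)"])
    show "((\<lambda>s. w (s, y)) has_real_derivative 0) (at s)" if "s \<in> {x - d<..<x + d}" for s
      using has_real_derivative_pd0[of w s y] horizontal[OF line[OF that] \<open>w \<in> {u, v}\<close>] by simp
  qed (use \<open>0 < d\<close> in auto)
  then have "(u (x + d/2, y), v (x + d/2, y)) = (u (x, y), v (x, y))" by simp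
  moreover have "(x + d/2, y) \<in> U" "(x, y) \<in> U" using line \<open>0 < d\<close> by auto
  ultimately have "(x + d/2, y) = (x, y)" using assms(3) by (auto dest: inj_onD)
  then show False using \<open>0 < d\<close> by simp
qed

context
  fixes U :: "(real \<times> real) set" and u v :: "real \<times> real \<Rightarrow> real"
    and a c e f a' c' e' f' :: real
  assumes U: "open U"
    and smooth_u: "smooth_fun_on U u" and smooth_v: "smooth_fun_on U v"
    and pde: "\<And>x. x \<in> U \<Longrightarrow> pullback_pde a c e f a' c' e' f' (pd 0 u) (pd 1 u) (pd 0 v) (pd 1 v) x"
    and ricci: "a * e + c * f - c\<^sup>2 \<noteq> 0"
begin

lemma pullback_pde_pd0_v_eq_0:
  assumes "x \<in> U"
  shows "pd 0 v x = 0"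
proof -
  define p q where "p = pd 0 v" and "q = pd 1 v"
  have smooth: "smooth_fun_on U p" "smooth_fun_on U q"
    unfolding p_def q_def using smooth_v by (simp_all add: smooth_fun_on_pd)
  then have diff: "partial_differentiable i p x" "partial_differentiable i q x" if "i < 2" for i
    using assms that by (simp_all add: smooth_fun_on_partial_differentiable)
  have p0: "pd 0 p y = a * p y - f' * (p y)\<^sup>2"
    and q0: "pd 0 q y = c * p y - f' * p y * q y"
    and p1: "pd 1 p y = c * p y - f' * p y * q y"
    and q1: "pd 1 q y = e * p y + f * q y - f' * (q y)\<^sup>2" if "y \<in> U" for y
    using pde[OF that] unfolding p_def q_def pullback_pde_def by linarith+
  have "pd 1 (pd 0 q) x = pd 1 (\<lambda>y. c * p y - f' * p y * q y) x"
    using U assms q0 by (rule pd_cong_open)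
  also have "\<dots> = c * pd 1 p x - f' * (pd 1 p x * q x + p x * pd 1 q x)"
    using diff by (simp add: pd_simps algebra_simps)
  finally have L: "pd 1 (pd 0 q) x = c * pd 1 p x - f' * (pd 1 p x * q x + p x * pd 1 q x)" .
  have "pd 0 (pd 1 q) x = pd 0 (\<lambda>y. e * p y + f * q y - f' * (q y)\<^sup>2) x"
    using U assms q1 by (rule pd_cong_open)
  also have "\<dots> = e * pd 0 p x + f * pd 0 q x - 2 * f' * q x * pd 0 q x"
    using diff by (simp add: pd_simps power2_eq_square algebra_simps)
  finally have R: "pd 0 (pd 1 q) x = e * pd 0 p x + f * pd 0 q x - 2 * f' * q x * pd 0 q x" .
  have "pd 1 (pd 0 q) x = pd 0 (pd 1 q) x"
    using U smooth(2) assms by (rule smooth_fun_on_pd_commute)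
  then have "(a * e + c * f - c\<^sup>2) * p x = 0"
    unfolding L R p0[OF assms] q0[OF assms] p1[OF assms] q1[OF assms]
    by (simp add: power2_eq_square algebra_simps)
  then show ?thesis using ricci by (simp add: p_def)
qed

lemma pullback_pde_pd1_pd1_v:
  assumes "x \<in> U"
  shows "pd 1 (pd 1 v) x = f * pd 1 v x - f' * (pd 1 v x)\<^sup>2"
  using pde[OF assms] pullback_pde_pd0_v_eq_0[OF assms] by (simp add: pullback_pde_def)

lemma pullback_pde_ricci_identity:
  assumes "x \<in> U"
  shows "pd 0 u x * ((a' * e' + c' * f' - c'\<^sup>2) * (pd 1 v x)\<^sup>2 - (a * e + c * f - c\<^sup>2)) = 0"
proof -
  define P Q q where "P = pd 0 u" and "Q = pd 1 u" and "q = pd 1 v"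
  have smooth: "smooth_fun_on U P" "smooth_fun_on U Q" "smooth_fun_on U q"
    unfolding P_def Q_def q_def using smooth_u smooth_v by (simp_all add: smooth_fun_on_pd)
  then have diff: "partial_differentiable i P x" "partial_differentiable i Q x"
      "partial_differentiable i q x" if "i < 2" for i
    using assms that by (simp_all add: smooth_fun_on_partial_differentiable)
  have P0: "pd 0 P y = a * P y - a' * (P y)\<^sup>2"
    and Q0: "pd 0 Q y = c * P y - a' * P y * Q y - c' * P y * q y"
    and P1: "pd 1 P y = c * P y - a' * P y * Q y - c' * P y * q y"
    and Q1: "pd 1 Q y = e * P y + f * Q y - a' * (Q y)\<^sup>2 - 2 * c' * Q y * q y - e' * (q y)\<^sup>2"
    and q0: "pd 0 q y = 0"
    and q1: "pd 1 q y = f * q y - f' * (q y)\<^sup>2" if "y \<in> U" for y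
    using pde[OF that] pullback_pde_pd0_v_eq_0[OF that] pullback_pde_pd1_pd1_v[OF that]
    unfolding P_def Q_def q_def pullback_pde_def by (simp_all add: algebra_simps)
  have "pd 1 (pd 0 Q) x = pd 1 (\<lambda>y. c * P y - a' * P y * Q y - c' * P y * q y) x"
    using U assms Q0 by (rule pd_cong_open)
  also have "\<dots> = c * pd 1 P x - a' * (pd 1 P x * Q x + P x * pd 1 Q x)
      - c' * (pd 1 P x * q x + P x * pd 1 q x)"
    using diff by (simp add: pd_simps algebra_simps)
  finally have L: "pd 1 (pd 0 Q) x = c * pd 1 P x - a' * (pd 1 P x * Q x + P x * pd 1 Q x)
      - c' * (pd 1 P x * q x + P x * pd 1 q x)" .
  have "pd 0 (pd 1 Q) x
      = pd 0 (\<lambda>y. e * P y + f * Q y - a' * (Q y)\<^sup>2 - 2 * c' * Q y * q y - e' * (q y)\<^sup>2) x"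
    using U assms Q1 by (rule pd_cong_open)
  also have "\<dots> = e * pd 0 P x + f * pd 0 Q x - 2 * a' * Q x * pd 0 Q x
      - 2 * c' * (pd 0 Q x * q x + Q x * pd 0 q x) - 2 * e' * q x * pd 0 q x"
    using diff by (simp add: pd_simps power2_eq_square algebra_simps)
  finally have R: "pd 0 (pd 1 Q) x = e * pd 0 P x + f * pd 0 Q x - 2 * a' * Q x * pd 0 Q x
      - 2 * c' * (pd 0 Q x * q x + Q x * pd 0 q x) - 2 * e' * q x * pd 0 q x" .
  have "pd 1 (pd 0 Q) x = pd 0 (pd 1 Q) x"
    using U smooth(2) assms by (rule smooth_fun_on_pd_commute)
  then show ?thesis
    unfolding L R P0[OF assms] Q0[OF assms] P1[OF assms] Q1[OF assms] q0[OF assms] q1[OF assms]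
    unfolding P_def[symmetric] q_def[symmetric]
    by (simp add: power2_eq_square algebra_simps)
qed

lemma pullback_pde_invariant:
  assumes "U \<noteq> {}" "inj_on (\<lambda>x. (u x, v x)) U"
  shows "f\<^sup>2 * (a' * e' + c' * f' - c'\<^sup>2) = f'\<^sup>2 * (a * e + c * f - c\<^sup>2)
    \<and> 0 < (a * e + c * f - c\<^sup>2) * (a' * e' + c' * f' - c'\<^sup>2)"
proof -
  define r r' P q where "r = a * e + c * f - c\<^sup>2" and "r' = a' * e' + c' * f' - c'\<^sup>2"
    and "P = pd 0 u" and "q = pd 1 v"
  have "\<exists>x\<in>U. P x \<noteq> 0"
    unfolding P_def using U assms smooth_fun_on_partial_differentiable[OF smooth_u]
      smooth_fun_on_partial_differentiable[OF smooth_v] pullback_pde_pd0_v_eq_0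
    by (intro inj_on_pd0_nonzero) auto
  then obtain x where x: "x \<in> U" "P x \<noteq> 0" by blast
  have K: "P y * (r' * (q y)\<^sup>2 - r) = 0" if "y \<in> U" for y
    using pullback_pde_ricci_identity[OF that] by (simp add: P_def q_def r_def r'_def)
  have rq: "r' * (q x)\<^sup>2 = r" using K[OF x(1)] x(2) by simp
  then have "r' \<noteq> 0" "q x \<noteq> 0" using ricci by (auto simp: r_def)
  have diff: "partial_differentiable 1 P x" "partial_differentiable 1 q x"
    unfolding P_def q_def using smooth_u smooth_v x(1)
    by (auto intro!: smooth_fun_on_partial_differentiable smooth_fun_on_pd)
  have "0 = pd 1 (\<lambda>y. P y * (r' * (q y)\<^sup>2 - r)) x"
    using pd_cong_open[OF U x(1), of "\<lambda>y. P y * (r' * (q y)\<^sup>2 - r)" "\<lambda>y. 0"] K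
    by (simp add: pd_simps)
  also have "\<dots> = P x * (2 * r' * q x * pd 1 q x)"
    using diff rq by (simp add: pd_simps power2_eq_square algebra_simps)
  finally have "pd 1 q x = 0"
    using x(2) \<open>r' \<noteq> 0\<close> \<open>q x \<noteq> 0\<close> by simp
  then have "f = f' * q x"
    using pullback_pde_pd1_pd1_v[OF x(1)] \<open>q x \<noteq> 0\<close> by (simp add: q_def power2_eq_square)
  then have "f\<^sup>2 * r' = f'\<^sup>2 * r" "r * r' = (r' * q x)\<^sup>2"
    using rq by (simp_all add: power2_eq_square algebra_simps)
  then show ?thesis
    using \<open>r' \<noteq> 0\<close> \<open>q x \<noteq> 0\<close> by (simp add: r_def r'_def)
qed

end

lemma affinely_equivalent_Gam_invariant:
  assumes "affinely_equivalent (Gam a 0 c 0 e f) (Gam a' 0 c' 0 e' f')"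
    and "a * e + c * f - c\<^sup>2 \<noteq> 0"
  shows "f\<^sup>2 * (a' * e' + c' * f' - c'\<^sup>2) = f'\<^sup>2 * (a * e + c * f - c\<^sup>2)
    \<and> 0 < (a * e + c * f - c\<^sup>2) * (a' * e' + c' * f' - c'\<^sup>2)"
proof -
  obtain U T S where U: "open U" "U \<noteq> {}" and inv: "\<forall>x\<in>U. S (T x) = x"
    and smooth: "smooth_map_on U T" and pb: "pullback_eq U T (Gam a 0 c 0 e f) (Gam a' 0 c' 0 e' f')"
    using assms(1) unfolding affinely_equivalent_def by blast
  have "inj_on (\<lambda>x. (fst (T x), snd (T x))) U"
    using inv by (auto intro: inj_on_inverseI)
  moreover have "smooth_fun_on U (\<lambda>p. fst (T p))" "smooth_fun_on U (\<lambda>p. snd (T p))"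
    using smooth unfolding smooth_map_on_def by (auto simp: coord_def dest: spec[of _ 0] spec[of _ 1])
  ultimately show ?thesis
    using pullback_pde_invariant[OF U(1) _ _ _ assms(2) U(2)] pb unfolding pullback_eq_Gam_iff by blast
qed

section \<open>Classification\<close>

lemma GammaF_eq_Gam:
  "GammaF i c = Gam (GammaF i c 0 0 0) 0 (GammaF i c 0 1 0) 0 (GammaF i c 1 1 0) (GammaF i c 1 1 1)"
  by (auto simp: GammaF_def Gam_def fun_eq_iff)

lemma square_plus_self_eq_iff:
  fixes x y :: real
  shows "x\<^sup>2 + x = y\<^sup>2 + y \<longleftrightarrow> x = y \<or> x = - 1 - y"
proof -
  have "x\<^sup>2 + x - (y\<^sup>2 + y) = (x - y) * (x + y + 1)"
    by (simp add: power2_eq_square algebra_simps)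
  then show ?thesis by auto
qed

text \<open>\<open>ricci_GammaF i c\<close> is \<open>ae + cf - c\<^sup>2\<close> for \<open>GammaF i c = \<Gamma>(a,0,c,0,e,f)\<close>, and
  \<open>defect_GammaF i\<close> is \<open>f\<^sup>2 - 4 (ae + cf - c\<^sup>2)\<close>, which does not depend on the parameter.\<close>

definition ricci_GammaF :: "nat \<Rightarrow> real \<Rightarrow> real" where
  "ricci_GammaF i c = (if i \<in> {1,4} then 1 else if i \<in> {2,3} then c\<^sup>2 + c else 1 + c\<^sup>2)"

definition defect_GammaF :: "nat \<Rightarrow> real" where
  "defect_GammaF i = (if i \<in> {1,4} then 0 else if i \<in> {2,3} then 1 else - 4)"

lemma ricci_GammaF_nonzero: "admissible i c \<Longrightarrow> ricci_GammaF i c \<noteq> 0"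
proof -
  have "c\<^sup>2 + c = c * (c + 1)" "0 < 1 + c\<^sup>2"
    by (simp_all add: power2_eq_square algebra_simps add_pos_nonneg)
  then show "admissible i c \<Longrightarrow> ricci_GammaF i c \<noteq> 0"
    by (auto simp: admissible_def ricci_GammaF_def)
qed

lemma affinely_equivalent_GammaF_invariant:
  assumes "admissible i c" "affinely_equivalent (GammaF i c) (GammaF j c')"
  shows "defect_GammaF i * ricci_GammaF j c' = defect_GammaF j * ricci_GammaF i c"
    and "0 < ricci_GammaF i c * ricci_GammaF j c'"
proof -
  have ricci: "GammaF i c 0 0 0 * GammaF i c 1 1 0 + GammaF i c 0 1 0 * GammaF i c 1 1 1
      - (GammaF i c 0 1 0)\<^sup>2 = ricci_GammaF i c"
    and defect: "(GammaF i c 1 1 1)\<^sup>2 = defect_GammaF i + 4 * ricci_GammaF i c" for i c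
    by (auto simp: GammaF_def Gam_def ricci_GammaF_def defect_GammaF_def power2_eq_square
        algebra_simps)
  have "affinely_equivalent
      (Gam (GammaF i c 0 0 0) 0 (GammaF i c 0 1 0) 0 (GammaF i c 1 1 0) (GammaF i c 1 1 1))
      (Gam (GammaF j c' 0 0 0) 0 (GammaF j c' 0 1 0) 0 (GammaF j c' 1 1 0) (GammaF j c' 1 1 1))"
    using assms(2) by (simp only: GammaF_eq_Gam[symmetric])
  from affinely_equivalent_Gam_invariant[OF this] ricci_GammaF_nonzero[OF assms(1)]
  have "(GammaF i c 1 1 1)\<^sup>2 * ricci_GammaF j c' = (GammaF j c' 1 1 1)\<^sup>2 * ricci_GammaF i c"
    and "0 < ricci_GammaF i c * ricci_GammaF j c'"
    unfolding ricci by blast+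
  then show "defect_GammaF i * ricci_GammaF j c' = defect_GammaF j * ricci_GammaF i c"
    and "0 < ricci_GammaF i c * ricci_GammaF j c'"
    unfolding defect by (simp_all add: algebra_simps)
qed

lemma proportional_imp_same_sign:
  fixes d d' r r' :: real
  assumes "d * r' = d' * r" "0 < r * r'"
  shows "0 \<le> d * d'"
proof -
  have "d * d' * r\<^sup>2 = d\<^sup>2 * (r * r')"
    using assms(1) by (simp add: power2_eq_square)
  then have "0 \<le> d * d' * r\<^sup>2"
    using assms(2) by simp
  moreover have "r \<noteq> 0" using assms(2) by auto
  ultimately show ?thesis by (simp add: zero_le_mult_iff)
qed

lemma affinely_equivalent_GammaF_classification:
  assumes "admissible i c" "admissible j c'" "affinely_equivalent (GammaF i c) (GammaF j c')"
  shows "(i \<in> {1,4} \<and> j \<in> {1,4})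
     \<or> (i \<in> {2,3} \<and> j \<in> {2,3} \<and> (c = c' \<or> c = -1 - c'))
     \<or> (i = 5 \<and> j = 5 \<and> (c = c' \<or> c = - c'))"
proof -
  note invariant = affinely_equivalent_GammaF_invariant[OF assms(1,3)]
  have "defect_GammaF i = defect_GammaF j"
    using invariant proportional_imp_same_sign[OF invariant] ricci_GammaF_nonzero[OF assms(1)]
    by (auto simp: defect_GammaF_def split: if_splits)
  moreover from this have "ricci_GammaF i c = ricci_GammaF j c'"
    using invariant(1) by (auto simp: defect_GammaF_def ricci_GammaF_def split: if_splits)
  ultimately show ?thesis
    using assms(1,2) by (auto simp: defect_GammaF_def ricci_GammaF_def admissible_def
        square_plus_self_eq_iff power2_eq_iff split: if_splits)
qed

theorem theorem3p7:
  fixes i j :: nat and c c' :: real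
  assumes "admissible i c" and "admissible j c'"
  shows "affinely_equivalent (GammaF i c) (GammaF j c') \<longleftrightarrow>
    ((i \<in> {1,4} \<and> j \<in> {1,4})
     \<or> (i \<in> {2,3} \<and> j \<in> {2,3} \<and> (c = c' \<or> c = -1 - c'))
     \<or> (i = 5 \<and> j = 5 \<and> (c = c' \<or> c = - c')))"
proof
  assume "affinely_equivalent (GammaF i c) (GammaF j c')"
  then show "(i \<in> {1,4} \<and> j \<in> {1,4})
     \<or> (i \<in> {2,3} \<and> j \<in> {2,3} \<and> (c = c' \<or> c = -1 - c'))
     \<or> (i = 5 \<and> j = 5 \<and> (c = c' \<or> c = - c'))"
    by (rule affinely_equivalent_GammaF_classification[OF assms])
qed (auto intro: affinely_equivalent_GammaF_1_4 affinely_equivalent_GammaF_2_3 affinely_equivalent_GammaF_5)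

end
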